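(* Let $\Omega\subset\mathbb{R}^2_+$ be a bounded Lipschitz open set with $[-\varepsilon_0,\varepsilon_0]\times\{0\}\subset\partial\Omega$, let $\varepsilon\in(0,\varepsilon_0]$, $\lambda\in\mathbb R$, and let $u\in\mathcal Q_\varepsilon$ be a nontrivial weak solution of $-\Delta u=\lambda u$ in $\Omega$, $u=0$ on $\partial\Omega\setminus\Gamma_\varepsilon$, $\partial_\nu u=0$ on $\Gamma_\varepsilon$. Let $j_L,j_R$ be odd positive integers and $\beta_L,\beta_R\in\mathbb R\setminus\{0\}$ be such that, with $\boldsymbol\theta(t)=(\cos t,\sin t)$ and $\boldsymbol\tau(t)=(-\sin t,\cos t)$, as $\delta\to0^+$: $\delta^{-j_L/2}u((-\varepsilon,0)+\delta\boldsymbol\theta(t))\to\beta_L\cos(\frac{j_L}{2}t)$ and $\delta^{-j_R/2}u((\varepsilon,0)+\delta\boldsymbol\theta(t))\to\beta_R\sin(\frac{j_R}{2}t)$ in $C^{1,\sigma}([0,\pi])$, and $\delta^{-j_L/2+1}\nabla u((-\varepsilon,0)+\delta\boldsymbol\theta(t))\to\frac{j_L\beta_L}{2}\big(\cos(\frac{j_L}2t)\boldsymbol\theta(t)-\sin(\frac{j_L}2t)\boldsymbol\tau(t)\big)$, $\delta^{-j_R/2+1}\nabla u((\varepsilon,0)+\delta\boldsymbol\theta(t))\to\frac{j_R\beta_R}{2}\big(\sin(\frac{j_R}2t)\boldsymbol\theta(t)+\cos(\frac{j_R}2t)\boldsymbol\tau(t)\big)$ in $C^{0,\sigma}([0,\pi])$,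 for all $\sigma\in(0,1)$. Define $$M(\varepsilon,u,\lambda)=\lim_{\delta\to0^+}\int_{\mathbb{R}^2_+\cap\partial A^\varepsilon_\delta}\Big(\tfrac12|\nabla u|^2x\cdot\mathbf n-\frac{\partial u}{\partial\mathbf n}(x\cdot\nabla u)-\tfrac\lambda2u^2\,x\cdot\mathbf n\Big)ds,$$ where $A^\varepsilon_\delta=D^+_\delta(-\varepsilon,0)\cup D^+_\delta(\varepsilon,0)$ and $\mathbf n$ is the unit normal to $\partial A^\varepsilon_\delta$ pointing into $A^\varepsilon_\delta$. Then the limit exists and $$M(\varepsilon,u,\lambda)=\begin{cases}0,&j_L>1,\ j_R>1,\\-\varepsilon\frac\pi8\beta_L^2,&j_L=1,\ j_R>1,\\-\varepsilon\frac\pi8\beta_R^2,&j_L>1,\ j_R=1,\\-\varepsilon\frac\pi8(\beta_L^2+\beta_R^2),&j_L=j_R=1.\end{cases}$$ In particular $M(\varepsilon,u,\lambda)\le0$.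
   Context: $\Gamma_\varepsilon=[-\varepsilon,\varepsilon]\times\{0\}$, $\mathcal Q_\varepsilon=\{u\in H^1(\Omega):\text{trace of }u=0\text{ on }\partial\Omega\setminus\Gamma_\varepsilon\}$. $D^+_\delta(a)=\{x\in\mathbb{R}^2:|x-a|<\delta,\ x_2>0\}$. The orientation of $\mathbf n$ is that of the exterior normal to the region $D^+_r\setminus A^\varepsilon_\delta$ (with $D^+_r$ the upper half-disk of radius $r>\varepsilon+\delta$ centered at $0$), i.e. on the half-circle $\{|x\mp(\varepsilon,0)|=\delta, x_2>0\}$ one has $\mathbf n=-(x\mp(\varepsilon,0))/\delta$. *)

theory Defs
  imports "HOL-Analysis.Analysis"
begin

type_synonym pt = "real \<times> real"

definition upper_half :: "pt set" where
  "upper_half = {x. snd x > 0}"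

definition lipschitz_open_set :: "pt set \<Rightarrow> bool" where
  "lipschitz_open_set \<Omega> \<longleftrightarrow> open \<Omega> \<and> bounded \<Omega> \<and>
     (\<forall>p\<in>frontier \<Omega>. \<exists>(R::pt\<Rightarrow>pt) (a::real) (b::real) (L::real) (\<gamma>::real\<Rightarrow>real). orthogonal_transformation R \<and> 0 < a \<and> 0 < b \<and>
        L-lipschitz_on UNIV \<gamma> \<and> \<gamma> 0 = 0 \<and> (\<forall>s. \<bar>s\<bar> < a \<longrightarrow> \<bar>\<gamma> s\<bar> < b) \<and>
        (\<forall>y1 y2. \<bar>y1\<bar> < a \<and> \<bar>y2\<bar> < b \<longrightarrow> (p + R (y1, y2) \<in> \<Omega> \<longleftrightarrow> y2 > \<gamma> y1)))"

definition Gamma :: "real \<Rightarrow> pt set" where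
  "Gamma \<epsilon> = {(s, 0) | s. \<bar>s\<bar> \<le> \<epsilon>}"

definition L2_on :: "pt set \<Rightarrow> (pt \<Rightarrow> 'a::euclidean_space) \<Rightarrow> bool" where
  "L2_on \<Omega> f \<longleftrightarrow> f \<in> borel_measurable (lebesgue_on \<Omega>) \<and>
     integrable (lebesgue_on \<Omega>) (\<lambda>x. (norm (f x))\<^sup>2)"

definition C1c_in :: "pt set \<Rightarrow> (pt \<Rightarrow> real) \<Rightarrow> (pt \<Rightarrow> pt) \<Rightarrow> bool" where
  "C1c_in S \<phi> D \<longleftrightarrow> (\<forall>x. (\<phi> has_derivative (\<lambda>h. D x \<bullet> h)) (at x)) \<and> continuous_on UNIV D \<and>
     compact (closure {x. \<phi> x \<noteq> 0}) \<and> closure {x. \<phi> x \<noteq> 0} \<subseteq> S"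

definition weak_gradient :: "pt set \<Rightarrow> (pt \<Rightarrow> real) \<Rightarrow> (pt \<Rightarrow> pt) \<Rightarrow> bool" where
  "weak_gradient \<Omega> u g \<longleftrightarrow> (\<forall>\<phi> D. C1c_in \<Omega> \<phi> D \<longrightarrow>
     (LINT x|lebesgue_on \<Omega>. u x *\<^sub>R D x) = - (LINT x|lebesgue_on \<Omega>. \<phi> x *\<^sub>R g x))"

definition H1 :: "pt set \<Rightarrow> (pt \<Rightarrow> real) \<Rightarrow> (pt \<Rightarrow> pt) \<Rightarrow> bool" where
  "H1 \<Omega> u g \<longleftrightarrow> L2_on \<Omega> u \<and> L2_on \<Omega> g \<and> weak_gradient \<Omega> u g"

text \<open>The space Q_eps: H^1(\<Omega>) functions whose trace vanishes on the boundary minus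
  Gamma_eps, described as the H^1(\<Omega>)-closure of restrictions of compactly supported
  C^1 functions whose support avoids the closure of (frontier \<Omega> - Gamma_eps).\<close>
definition Q_space :: "pt set \<Rightarrow> real \<Rightarrow> (pt \<Rightarrow> real) \<Rightarrow> (pt \<Rightarrow> pt) \<Rightarrow> bool" where
  "Q_space \<Omega> \<epsilon> v gv \<longleftrightarrow> H1 \<Omega> v gv \<and>
     (\<exists>\<phi> D. (\<forall>n. C1c_in (- closure (frontier \<Omega> - Gamma \<epsilon>)) (\<phi> n) (D n)) \<and>
        (\<lambda>n. LINT x|lebesgue_on \<Omega>. (v x - \<phi> n x)\<^sup>2 + (norm (gv x - D n x))\<^sup>2) \<longlonglongrightarrow> 0)"

text \<open>u (with weak gradient g) in Q_eps is a weak solution of -Laplace u = lambda u with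
  u = 0 on boundary minus Gamma_eps and zero Neumann data on Gamma_eps.\<close>
definition weak_eigenfunction :: "pt set \<Rightarrow> real \<Rightarrow> real \<Rightarrow> (pt \<Rightarrow> real) \<Rightarrow> (pt \<Rightarrow> pt) \<Rightarrow> bool" where
  "weak_eigenfunction \<Omega> \<epsilon> lam u g \<longleftrightarrow> Q_space \<Omega> \<epsilon> u g \<and>
     (\<forall>v gv. Q_space \<Omega> \<epsilon> v gv \<longrightarrow>
        (LINT x|lebesgue_on \<Omega>. g x \<bullet> gv x) = lam * (LINT x|lebesgue_on \<Omega>. u x * v x))"

definition C0_holder_conv :: "real set \<Rightarrow> real \<Rightarrow> (real \<Rightarrow> real \<Rightarrow> 'a::real_normed_vector)
    \<Rightarrow> (real \<Rightarrow> 'a) \<Rightarrow> real filter \<Rightarrow> bool" where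
  "C0_holder_conv S \<sigma> F f flt \<longleftrightarrow> (\<forall>e>0. \<forall>\<^sub>F \<delta> in flt.
     (\<forall>t\<in>S. norm (F \<delta> t - f t) \<le> e) \<and>
     (\<forall>s\<in>S. \<forall>t\<in>S. norm ((F \<delta> s - f s) - (F \<delta> t - f t)) \<le> e * \<bar>s - t\<bar> powr \<sigma>))"

definition C1_holder_conv :: "real set \<Rightarrow> real \<Rightarrow> (real \<Rightarrow> real \<Rightarrow> real)
    \<Rightarrow> (real \<Rightarrow> real) \<Rightarrow> real filter \<Rightarrow> bool" where
  "C1_holder_conv S \<sigma> F f flt \<longleftrightarrow> (\<exists>F' f'.
     (\<forall>t\<in>S. (f has_real_derivative f' t) (at t within S)) \<and>
     (\<forall>\<^sub>F \<delta> in flt. \<forall>t\<in>S. (F \<delta> has_real_derivative F' \<delta> t) (at t within S)) \<and>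
     C0_holder_conv S \<sigma> F f flt \<and> C0_holder_conv S \<sigma> F' f' flt)"

definition theta :: "real \<Rightarrow> pt" where "theta t = (cos t, sin t)"
definition tau :: "real \<Rightarrow> pt" where "tau t = (- sin t, cos t)"

text \<open>Integral over R^2_+ \<inter> \<partial>A^eps_delta (for 0 < delta < eps: two open half-circles
  of radius delta centred at (-eps,0),(eps,0)), w.r.t. arc length, of the Pohozaev
  integrand, with n the unit normal pointing into A (n = -theta(t)).\<close>
definition pohozaev_integrand :: "real \<Rightarrow> (pt \<Rightarrow> real) \<Rightarrow> (pt \<Rightarrow> pt) \<Rightarrow> pt \<Rightarrow> pt \<Rightarrow> real" where
  "pohozaev_integrand lam u g x n =
     1/2 * (norm (g x))\<^sup>2 * (x \<bullet> n) - (g x \<bullet> n) * (x \<bullet> g x) - lam/2 * (u x)\<^sup>2 * (x \<bullet> n)"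

definition half_circle_int :: "real \<Rightarrow> (pt \<Rightarrow> real) \<Rightarrow> (pt \<Rightarrow> pt) \<Rightarrow> pt \<Rightarrow> real \<Rightarrow> real" where
  "half_circle_int lam u g c \<delta> =
     integral {0..pi} (\<lambda>t. pohozaev_integrand lam u g (c + \<delta> *\<^sub>R theta t) (- theta t) * \<delta>)"

definition M_delta :: "real \<Rightarrow> real \<Rightarrow> (pt \<Rightarrow> real) \<Rightarrow> (pt \<Rightarrow> pt) \<Rightarrow> real \<Rightarrow> real" where
  "M_delta \<epsilon> lam u g \<delta> = half_circle_int lam u g (- \<epsilon>, 0) \<delta> + half_circle_int lam u g (\<epsilon>, 0) \<delta>"

end

theory Submission
  imports Defs
begin

text \<open>Near a tip where u grows like \<delta>^(j/2), the Pohozaev integrand on the half-circle of radius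
  \<delta>, times the arc-length factor \<delta>, equals \<delta>^(j-1) times an expression in the blow-up profiles
  of u and \<nabla>u. Hoelder convergence of the profiles gives uniform convergence, so the half-circle
  integral tends to 0 when j > 1. When j = 1 the limiting gradient profile is (\<beta>/2) \<theta>(t/2) at
  the left tip and (\<beta>/2) \<tau>(t/2) at the right tip, and the limiting integrand is the constant
  -\<epsilon> \<beta>^2/8 on [0, \<pi>]; each tip with j = 1 thus contributes -\<epsilon> \<pi> \<beta>^2/8.\<close>

lemma C0_holder_conv_imp_uniform_limit:
  assumes "C0_holder_conv S \<sigma> F f flt"
  shows "uniform_limit S F f flt"
proof (rule uniform_limitI)
  fix e :: real assume "e > 0"
  then have "\<forall>\<^sub>F \<delta> in flt. \<forall>t\<in>S. norm (F \<delta> t - f t) \<le> e/2"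
    using assms unfolding C0_holder_conv_def by (auto elim!: allE[of _ "e/2"] eventually_mono)
  then show "\<forall>\<^sub>F \<delta> in flt. \<forall>t\<in>S. dist (F \<delta> t) (f t) < e"
    by eventually_elim (use \<open>e > 0\<close> in \<open>auto simp: dist_norm intro: le_less_trans\<close>)
qed

lemma holder_continuous_on:
  fixes h :: "real \<Rightarrow> 'a::real_normed_vector"
  assumes "0 < \<sigma>" and "\<forall>s\<in>S. \<forall>t\<in>S. norm (h s - h t) \<le> C * \<bar>s - t\<bar> powr \<sigma>"
  shows "continuous_on S h"
  unfolding continuous_on_iff
proof (intro ballI allI impI)
  fix x e assume x: "x \<in> S" and e: "(0::real) < e"
  define C' where "C' = max C 1"
  have C': "C' > 0" "C \<le> C'" by (auto simp: C'_def)
  show "\<exists>d>0. \<forall>y\<in>S. dist y x < d \<longrightarrow> dist (h y) (h x) < e"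
  proof (intro exI[of _ "(e / C') powr (1 / \<sigma>)"] conjI ballI impI)
    show "0 < (e / C') powr (1 / \<sigma>)" using e C' by simp
    fix y assume y: "y \<in> S" and d: "dist y x < (e / C') powr (1 / \<sigma>)"
    have "dist (h y) (h x) \<le> C' * \<bar>y - x\<bar> powr \<sigma>"
    proof -
      have "norm (h y - h x) \<le> C * \<bar>y - x\<bar> powr \<sigma>" using assms(2) x y by blast
      also have "\<dots> \<le> C' * \<bar>y - x\<bar> powr \<sigma>" using C'(2) by (intro mult_right_mono) auto
      finally show ?thesis by (simp add: dist_norm)
    qed
    also have "\<bar>y - x\<bar> powr \<sigma> < ((e / C') powr (1 / \<sigma>)) powr \<sigma>"
      using d assms(1) by (intro powr_less_mono2) (auto simp: dist_real_def)
    also have "((e / C') powr (1 / \<sigma>)) powr \<sigma> = e / C'"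
      using assms(1) e C' by (simp add: powr_powr)
    finally show "dist (h y) (h x) < e" using C' by (simp add: mult_less_cancel_left_pos)
  qed
qed

lemma C0_holder_conv_imp_eventually_continuous_on:
  fixes F :: "real \<Rightarrow> real \<Rightarrow> 'a::real_normed_vector"
  assumes "C0_holder_conv S \<sigma> F f flt" and "0 < \<sigma>" and "continuous_on S f"
  shows "\<forall>\<^sub>F \<delta> in flt. continuous_on S (F \<delta>)"
proof -
  have "\<forall>\<^sub>F \<delta> in flt. \<forall>s\<in>S. \<forall>t\<in>S. norm ((F \<delta> s - f s) - (F \<delta> t - f t)) \<le> 1 * \<bar>s - t\<bar> powr \<sigma>"
    using assms(1) unfolding C0_holder_conv_def by (auto elim!: allE[of _ 1] eventually_mono)
  then show ?thesis
  proof eventually_elim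
    case (elim \<delta>)
    then have "continuous_on S (\<lambda>t. (F \<delta> t - f t) + f t)"
      by (intro continuous_on_add holder_continuous_on[OF assms(2)] assms(3))
    then show ?case by simp
  qed
qed

lemma tendsto_integral_uniform_limit:
  fixes F :: "'a \<Rightarrow> real \<Rightarrow> 'b::banach"
  assumes u: "uniform_limit {a..b} F f flt"
    and cF: "\<forall>\<^sub>F n in flt. continuous_on {a..b} (F n)"
    and cf: "continuous_on {a..b} f" and flt: "flt \<noteq> bot"
  shows "((\<lambda>n. integral {a..b} (F n)) \<longlongrightarrow> integral {a..b} f) flt"
proof -
  \<comment> \<open>uniform_limit_integral wants every member continuous; the others are replaced by f.\<close>
  define F' where "F' n = (if continuous_on {a..b} (F n) then F n else f)" for n
  have "\<forall>\<^sub>F n in flt. F' n = F n" using cF by eventually_elim (simp add: F'_def)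
  then have "uniform_limit {a..b} F' f flt"
    using u unfolding uniform_limit_iff by (auto elim!: eventually_rev_mp)
  moreover have "continuous_on {a..b} (F' n)" for n using cf by (simp add: F'_def)
  ultimately obtain I J where I: "\<And>n. (F' n has_integral I n) {a..b}"
    and J: "(f has_integral J) {a..b}" and IJ: "(I \<longlongrightarrow> J) flt"
    using uniform_limit_integral flt by blast
  have "\<forall>\<^sub>F n in flt. I n = integral {a..b} (F n)"
    using \<open>\<forall>\<^sub>F n in flt. F' n = F n\<close> by eventually_elim (metis I integral_unique)
  with IJ show ?thesis
    using integral_unique[OF J] by (auto intro: tendsto_cong[THEN iffD1])
qed

lemma inner_theta_self [simp]: "theta t \<bullet> theta t = 1"
  by (simp add: theta_def power2_eq_square[symmetric])

lemma theta_continuous_on [continuous_intros]: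
  "continuous_on S (f :: real \<Rightarrow> real) \<Longrightarrow> continuous_on S (\<lambda>x. theta (f x))"
  unfolding theta_def by (auto intro!: continuous_intros)

lemma pohozaev_integrand_blowup:
  fixes c :: pt and t :: real and u :: "pt \<Rightarrow> real" and g :: "pt \<Rightarrow> pt"
  assumes "j \<ge> 1" and "\<delta> > 0"
  defines "U \<equiv> \<delta> powr (- real j / 2) * u (c + \<delta> *\<^sub>R theta t)"
      and "G \<equiv> \<delta> powr (- real j / 2 + 1) *\<^sub>R g (c + \<delta> *\<^sub>R theta t)"
  shows "pohozaev_integrand lam u g (c + \<delta> *\<^sub>R theta t) (- theta t) * \<delta> =
     \<delta> ^ (j - 1) * (1/2 * (G \<bullet> G) * (- (c \<bullet> theta t) - \<delta>) + (G \<bullet> theta t) * (c \<bullet> G + \<delta> * (theta t \<bullet> G))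
        + lam/2 * \<delta> * \<delta> * (U * U) * (c \<bullet> theta t + \<delta>))"
proof -
  define a where "a = \<delta> powr (real j / 2 - 1)"
  define x where "x = c + \<delta> *\<^sub>R theta t"
  have g_x: "g x = a *\<^sub>R G"
    using \<open>\<delta> > 0\<close> by (simp add: G_def x_def a_def powr_add[symmetric])
  have u_x: "u x = a * \<delta> * U"
    using \<open>\<delta> > 0\<close> by (simp add: U_def x_def a_def powr_add[symmetric] powr_mult_base mult.commute[of _ \<delta>])
  have "a * a * \<delta> = \<delta> powr (real j / 2 - 1) * \<delta> powr (real j / 2 - 1) * \<delta> powr 1"
    using \<open>\<delta> > 0\<close> by (simp add: a_def)
  also have "\<dots> = \<delta> powr ((real j / 2 - 1) + (real j / 2 - 1) + 1)"
    by (simp only: powr_add)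
  also have "\<dots> = \<delta> ^ (j - 1)"
    using \<open>\<delta> > 0\<close> \<open>j \<ge> 1\<close> by (simp add: powr_realpow[symmetric] of_nat_diff)
  finally have a_sq: "a * a * \<delta> = \<delta> ^ (j - 1)" .
  have "pohozaev_integrand lam u g x (- theta t) * \<delta> =
     (a * a * \<delta>) * (1/2 * (G \<bullet> G) * (- (c \<bullet> theta t) - \<delta>) + (G \<bullet> theta t) * (c \<bullet> G + \<delta> * (theta t \<bullet> G))
        + lam/2 * \<delta> * \<delta> * (U * U) * (c \<bullet> theta t + \<delta>))"
    unfolding pohozaev_integrand_def g_x u_x power2_norm_eq_inner
    by (simp add: x_def inner_add_left inner_add_right inner_commute[of "theta t" G] power2_eq_square field_simps)
  then show ?thesis by (simp add: a_sq x_def)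
qed

lemma bounded_image_continuous_on_interval:
  "continuous_on {a..b} (f :: real \<Rightarrow> 'a::metric_space) \<Longrightarrow> bounded (f ` {a..b})"
  by (intro compact_imp_bounded compact_continuous_image) auto

lemma half_circle_int_tendsto:
  fixes c :: pt and U0 :: "real \<Rightarrow> real" and G0 :: "real \<Rightarrow> pt"
    and u :: "pt \<Rightarrow> real" and g :: "pt \<Rightarrow> pt"
  assumes "j \<ge> 1" and "0 < \<sigma>"
    and U: "C0_holder_conv {0..pi} \<sigma> (\<lambda>\<delta> t. \<delta> powr (- real j / 2) * u (c + \<delta> *\<^sub>R theta t)) U0 (at_right 0)"
    and G: "C0_holder_conv {0..pi} \<sigma> (\<lambda>\<delta> t. \<delta> powr (- real j / 2 + 1) *\<^sub>R g (c + \<delta> *\<^sub>R theta t)) G0 (at_right 0)"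
    and U0: "continuous_on {0..pi} U0" and G0: "continuous_on {0..pi} G0"
  shows "(half_circle_int lam u g c \<longlongrightarrow> (if j = 1 then integral {0..pi}
     (\<lambda>t. 1/2 * (G0 t \<bullet> G0 t) * (- (c \<bullet> theta t)) + (G0 t \<bullet> theta t) * (c \<bullet> G0 t)) else 0)) (at_right 0)"
proof -
  define Ud where "Ud = (\<lambda>\<delta> t. \<delta> powr (- real j / 2) * u (c + \<delta> *\<^sub>R theta t))"
  define Gd where "Gd = (\<lambda>\<delta> t. \<delta> powr (- real j / 2 + 1) *\<^sub>R g (c + \<delta> *\<^sub>R theta t))"
  define R where "R = (\<lambda>\<delta> U G t. 1/2 * (G \<bullet> G) * (- (c \<bullet> theta t) - \<delta>)
        + (G \<bullet> theta t) * (c \<bullet> G + \<delta> * (theta t \<bullet> G)) + lam/2 * \<delta> * \<delta> * (U * U) * (c \<bullet> theta t + \<delta>))"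
  define P where "P = (\<lambda>\<delta> t. R \<delta> (Ud \<delta> t) (Gd \<delta> t) t)"
  define Q where "Q = (\<lambda>t. R 0 (U0 t) (G0 t) t)"
  have "uniform_limit {0..pi} Ud U0 (at_right 0)" "uniform_limit {0..pi} Gd G0 (at_right 0)"
    using U G unfolding Ud_def Gd_def by (simp_all add: C0_holder_conv_imp_uniform_limit)
  moreover have "uniform_limit {0..pi} (\<lambda>\<delta> t. \<delta>) (\<lambda>t. 0) (at_right 0)"
    using tendstoD[OF tendsto_ident_at[of 0 "{0<..}"]] by (intro uniform_limitI) auto
  ultimately have "uniform_limit {0..pi} P Q (at_right 0)"
    unfolding P_def Q_def R_def
    by (intro uniform_limit_intros bounded_image_continuous_on_interval continuous_intros U0 G0)
  moreover have "\<forall>\<^sub>F \<delta> in at_right 0. continuous_on {0..pi} (Ud \<delta>)"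
    "\<forall>\<^sub>F \<delta> in at_right 0. continuous_on {0..pi} (Gd \<delta>)"
    unfolding Ud_def Gd_def
    using C0_holder_conv_imp_eventually_continuous_on U G U0 G0 \<open>0 < \<sigma>\<close> by blast+
  then have "\<forall>\<^sub>F \<delta> in at_right 0. continuous_on {0..pi} (P \<delta>)"
    by eventually_elim (auto simp: P_def R_def intro!: continuous_intros)
  moreover have "continuous_on {0..pi} Q"
    unfolding Q_def R_def by (intro continuous_intros U0 G0)
  ultimately have "((\<lambda>\<delta>. integral {0..pi} (P \<delta>)) \<longlongrightarrow> integral {0..pi} Q) (at_right 0)"
    by (intro tendsto_integral_uniform_limit) auto
  moreover have "((\<lambda>\<delta>::real. \<delta> ^ (j - 1)) \<longlongrightarrow> (if j = 1 then 1 else 0)) (at_right 0)"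
    using tendsto_power[OF tendsto_ident_at, of "j - 1" 0 "{0<..}"] \<open>j \<ge> 1\<close>
    by (cases "j = 1") auto
  ultimately have "((\<lambda>\<delta>. \<delta> ^ (j - 1) * integral {0..pi} (P \<delta>))
      \<longlongrightarrow> (if j = 1 then 1 else 0) * integral {0..pi} Q) (at_right 0)"
    by (intro tendsto_mult)
  moreover have "\<forall>\<^sub>F \<delta> in at_right 0. \<delta> ^ (j - 1) * integral {0..pi} (P \<delta>) = half_circle_int lam u g c \<delta>"
    using eventually_at_right_less[of "0::real"]
    by eventually_elim
      (simp add: half_circle_int_def P_def R_def Ud_def Gd_def pohozaev_integrand_blowup[OF \<open>j \<ge> 1\<close>])
  ultimately show ?thesis
    by (simp add: tendsto_cong Q_def R_def split: if_splits)
qed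

lemma tau_continuous_on [continuous_intros]:
  "continuous_on S (f :: real \<Rightarrow> real) \<Longrightarrow> continuous_on S (\<lambda>x. tau (f x))"
  unfolding tau_def by (auto intro!: continuous_intros)

lemma cos_theta_minus_sin_tau: "cos a *\<^sub>R theta t - sin a *\<^sub>R tau t = theta (t - a)"
  by (simp add: theta_def tau_def cos_diff sin_diff algebra_simps)

lemma sin_theta_plus_cos_tau: "sin a *\<^sub>R theta t + cos a *\<^sub>R tau t = tau (t - a)"
  by (simp add: theta_def tau_def cos_diff sin_diff algebra_simps)

lemma blowup_integrand_theta_half:
  "1/2 * ((b *\<^sub>R theta (t/2)) \<bullet> (b *\<^sub>R theta (t/2))) * (- ((- \<epsilon>, 0) \<bullet> theta t))
     + ((b *\<^sub>R theta (t/2)) \<bullet> theta t) * ((- \<epsilon>, 0) \<bullet> (b *\<^sub>R theta (t/2))) = - \<epsilon> * b\<^sup>2 / 2"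
proof -
  define cs sn where "cs = cos (t/2)" and "sn = sin (t/2)"
  have theta_t: "theta t = (cs\<^sup>2 - sn\<^sup>2, 2 * sn * cs)"
    using cos_double[of "t/2"] sin_double[of "t/2"] by (simp add: theta_def cs_def sn_def)
  have "1/2 * ((b *\<^sub>R theta (t/2)) \<bullet> (b *\<^sub>R theta (t/2))) * (- ((- \<epsilon>, 0) \<bullet> theta t))
     + ((b *\<^sub>R theta (t/2)) \<bullet> theta t) * ((- \<epsilon>, 0) \<bullet> (b *\<^sub>R theta (t/2)))
     = - \<epsilon> * b\<^sup>2 / 2 * (sn\<^sup>2 + cs\<^sup>2)\<^sup>2"
    unfolding theta_t unfolding theta_def cs_def[symmetric] sn_def[symmetric]
    by (simp only: scaleR_Pair inner_Pair inner_real_def real_scaleR_def) algebra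
  also have "sn\<^sup>2 + cs\<^sup>2 = 1" by (simp add: cs_def sn_def)
  finally show ?thesis by simp
qed

lemma blowup_integrand_tau_half:
  "1/2 * ((b *\<^sub>R tau (t/2)) \<bullet> (b *\<^sub>R tau (t/2))) * (- ((\<epsilon>, 0) \<bullet> theta t))
     + ((b *\<^sub>R tau (t/2)) \<bullet> theta t) * ((\<epsilon>, 0) \<bullet> (b *\<^sub>R tau (t/2))) = - \<epsilon> * b\<^sup>2 / 2"
proof -
  define cs sn where "cs = cos (t/2)" and "sn = sin (t/2)"
  have theta_t: "theta t = (cs\<^sup>2 - sn\<^sup>2, 2 * sn * cs)"
    using cos_double[of "t/2"] sin_double[of "t/2"] by (simp add: theta_def cs_def sn_def)
  have "1/2 * ((b *\<^sub>R tau (t/2)) \<bullet> (b *\<^sub>R tau (t/2))) * (- ((\<epsilon>, 0) \<bullet> theta t))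
     + ((b *\<^sub>R tau (t/2)) \<bullet> theta t) * ((\<epsilon>, 0) \<bullet> (b *\<^sub>R tau (t/2)))
     = - \<epsilon> * b\<^sup>2 / 2 * (sn\<^sup>2 + cs\<^sup>2)\<^sup>2"
    unfolding theta_t unfolding theta_def tau_def cs_def[symmetric] sn_def[symmetric]
    by (simp only: scaleR_Pair inner_Pair inner_real_def real_scaleR_def) algebra
  also have "sn\<^sup>2 + cs\<^sup>2 = 1" by (simp add: cs_def sn_def)
  finally show ?thesis by simp
qed

lemma half_circle_int_tendsto_cos_mode:
  fixes u :: "pt \<Rightarrow> real" and g :: "pt \<Rightarrow> pt"
  assumes "j \<ge> 1" and "0 < \<sigma>"
    and U: "C0_holder_conv {0..pi} \<sigma> (\<lambda>\<delta> t. \<delta> powr (- real j / 2) * u ((- \<epsilon>, 0) + \<delta> *\<^sub>R theta t))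
        (\<lambda>t. \<beta> * cos (real j / 2 * t)) (at_right 0)"
    and G: "C0_holder_conv {0..pi} \<sigma> (\<lambda>\<delta> t. \<delta> powr (- real j / 2 + 1) *\<^sub>R g ((- \<epsilon>, 0) + \<delta> *\<^sub>R theta t))
        (\<lambda>t. (real j * \<beta> / 2) *\<^sub>R (cos (real j / 2 * t) *\<^sub>R theta t - sin (real j / 2 * t) *\<^sub>R tau t))
        (at_right 0)"
  shows "(half_circle_int lam u g (- \<epsilon>, 0) \<longlongrightarrow> (if j = 1 then - \<epsilon> * pi / 8 * \<beta>\<^sup>2 else 0)) (at_right 0)"
proof (cases "j = 1")
  case True
  have "(real j * \<beta> / 2) *\<^sub>R (cos (real j / 2 * t) *\<^sub>R theta t - sin (real j / 2 * t) *\<^sub>R tau t)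
      = (\<beta> / 2) *\<^sub>R theta (t/2)" for t
    using True by (simp add: cos_theta_minus_sin_tau)
  then have "(half_circle_int lam u g (- \<epsilon>, 0) \<longlongrightarrow> integral {0..pi} (\<lambda>t. - \<epsilon> * (\<beta>/2)\<^sup>2 / 2)) (at_right 0)"
    using half_circle_int_tendsto[OF \<open>j \<ge> 1\<close> \<open>0 < \<sigma>\<close> U G, of lam] True
    by (simp only: blowup_integrand_theta_half if_True) (simp add: continuous_intros)
  with True show ?thesis by (simp add: power2_eq_square mult_ac)
qed (use half_circle_int_tendsto[OF \<open>j \<ge> 1\<close> \<open>0 < \<sigma>\<close> U G, of lam] in \<open>simp add: continuous_intros\<close>)

lemma half_circle_int_tendsto_sin_mode:
  fixes u :: "pt \<Rightarrow> real" and g :: "pt \<Rightarrow> pt"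
  assumes "j \<ge> 1" and "0 < \<sigma>"
    and U: "C0_holder_conv {0..pi} \<sigma> (\<lambda>\<delta> t. \<delta> powr (- real j / 2) * u ((\<epsilon>, 0) + \<delta> *\<^sub>R theta t))
        (\<lambda>t. \<beta> * sin (real j / 2 * t)) (at_right 0)"
    and G: "C0_holder_conv {0..pi} \<sigma> (\<lambda>\<delta> t. \<delta> powr (- real j / 2 + 1) *\<^sub>R g ((\<epsilon>, 0) + \<delta> *\<^sub>R theta t))
        (\<lambda>t. (real j * \<beta> / 2) *\<^sub>R (sin (real j / 2 * t) *\<^sub>R theta t + cos (real j / 2 * t) *\<^sub>R tau t))
        (at_right 0)"
  shows "(half_circle_int lam u g (\<epsilon>, 0) \<longlongrightarrow> (if j = 1 then - \<epsilon> * pi / 8 * \<beta>\<^sup>2 else 0)) (at_right 0)"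
proof (cases "j = 1")
  case True
  have "(real j * \<beta> / 2) *\<^sub>R (sin (real j / 2 * t) *\<^sub>R theta t + cos (real j / 2 * t) *\<^sub>R tau t)
      = (\<beta> / 2) *\<^sub>R tau (t/2)" for t
    using True by (simp add: sin_theta_plus_cos_tau)
  then have "(half_circle_int lam u g (\<epsilon>, 0) \<longlongrightarrow> integral {0..pi} (\<lambda>t. - \<epsilon> * (\<beta>/2)\<^sup>2 / 2)) (at_right 0)"
    using half_circle_int_tendsto[OF \<open>j \<ge> 1\<close> \<open>0 < \<sigma>\<close> U G, of lam] True
    by (simp only: blowup_integrand_tau_half if_True) (simp add: continuous_intros)
  with True show ?thesis by (simp add: power2_eq_square mult_ac)
qed (use half_circle_int_tendsto[OF \<open>j \<ge> 1\<close> \<open>0 < \<sigma>\<close> U G, of lam] in \<open>simp add: continuous_intros\<close>)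

lemma C1_holder_conv_imp_C0_holder_conv:
  "C1_holder_conv S \<sigma> F f flt \<Longrightarrow> C0_holder_conv S \<sigma> F f flt"
  unfolding C1_holder_conv_def by blast

theorem lemmaC5:
  fixes \<Omega> :: "pt set" and \<epsilon>0 \<epsilon> lam \<beta>L \<beta>R :: real and jL jR :: nat
    and u :: "pt \<Rightarrow> real" and g :: "pt \<Rightarrow> pt"
  assumes lip: "lipschitz_open_set \<Omega>" and half: "\<Omega> \<subseteq> upper_half"
    and edge: "Gamma \<epsilon>0 \<subseteq> frontier \<Omega>"
    and eps: "0 < \<epsilon>" "\<epsilon> \<le> \<epsilon>0"
    and sol: "weak_eigenfunction \<Omega> \<epsilon> lam u g"
    and nontriv: "\<not> (AE x in lebesgue_on \<Omega>. u x = 0)"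
    and grad: "\<forall>x\<in>\<Omega>. (u has_derivative (\<lambda>h. g x \<bullet> h)) (at x)"
    and jodd: "odd jL" "odd jR"
    and beta: "\<beta>L \<noteq> 0" "\<beta>R \<noteq> 0"
    and asyL: "\<forall>\<sigma>. 0 < \<sigma> \<and> \<sigma> < 1 \<longrightarrow> C1_holder_conv {0..pi} \<sigma>
        (\<lambda>\<delta> t. \<delta> powr (- real jL / 2) * u ((- \<epsilon>, 0) + \<delta> *\<^sub>R theta t))
        (\<lambda>t. \<beta>L * cos (real jL / 2 * t)) (at_right 0)"
    and asyR: "\<forall>\<sigma>. 0 < \<sigma> \<and> \<sigma> < 1 \<longrightarrow> C1_holder_conv {0..pi} \<sigma>
        (\<lambda>\<delta> t. \<delta> powr (- real jR / 2) * u ((\<epsilon>, 0) + \<delta> *\<^sub>R theta t))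
        (\<lambda>t. \<beta>R * sin (real jR / 2 * t)) (at_right 0)"
    and gasyL: "\<forall>\<sigma>. 0 < \<sigma> \<and> \<sigma> < 1 \<longrightarrow> C0_holder_conv {0..pi} \<sigma>
        (\<lambda>\<delta> t. \<delta> powr (- real jL / 2 + 1) *\<^sub>R g ((- \<epsilon>, 0) + \<delta> *\<^sub>R theta t))
        (\<lambda>t. (real jL * \<beta>L / 2) *\<^sub>R
              (cos (real jL / 2 * t) *\<^sub>R theta t - sin (real jL / 2 * t) *\<^sub>R tau t)) (at_right 0)"
    and gasyR: "\<forall>\<sigma>. 0 < \<sigma> \<and> \<sigma> < 1 \<longrightarrow> C0_holder_conv {0..pi} \<sigma>
        (\<lambda>\<delta> t. \<delta> powr (- real jR / 2 + 1) *\<^sub>R g ((\<epsilon>, 0) + \<delta> *\<^sub>R theta t))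
        (\<lambda>t. (real jR * \<beta>R / 2) *\<^sub>R
              (sin (real jR / 2 * t) *\<^sub>R theta t + cos (real jR / 2 * t) *\<^sub>R tau t)) (at_right 0)"
  shows "\<exists>M. (M_delta \<epsilon> lam u g \<longlongrightarrow> M) (at_right 0) \<and>
           M = (if jL > 1 \<and> jR > 1 then 0
                else if jL = 1 \<and> jR > 1 then - \<epsilon> * pi / 8 * \<beta>L\<^sup>2
                else if jL > 1 \<and> jR = 1 then - \<epsilon> * pi / 8 * \<beta>R\<^sup>2
                else - \<epsilon> * pi / 8 * (\<beta>L\<^sup>2 + \<beta>R\<^sup>2)) \<and>
           M \<le> 0"
proof -
  \<comment> \<open>The limit is determined by the blow-up asymptotics alone, at a single Hoelder exponent.\<close>
  have \<sigma>: "0 < (1/2::real) \<and> (1/2::real) < 1" by simp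
  have j: "jL \<ge> 1" "jR \<ge> 1" using jodd by (auto simp: Suc_le_eq odd_pos)
  define M_left where "M_left = (if jL = 1 then - \<epsilon> * pi / 8 * \<beta>L\<^sup>2 else 0)"
  define M_right where "M_right = (if jR = 1 then - \<epsilon> * pi / 8 * \<beta>R\<^sup>2 else 0)"
  have "(half_circle_int lam u g (- \<epsilon>, 0) \<longlongrightarrow> M_left) (at_right 0)"
    unfolding M_left_def using asyL gasyL \<sigma>
    by (intro half_circle_int_tendsto_cos_mode[OF j(1), of "1/2"] C1_holder_conv_imp_C0_holder_conv) auto
  moreover have "(half_circle_int lam u g (\<epsilon>, 0) \<longlongrightarrow> M_right) (at_right 0)"
    unfolding M_right_def using asyR gasyR \<sigma>
    by (intro half_circle_int_tendsto_sin_mode[OF j(2), of "1/2"] C1_holder_conv_imp_C0_holder_conv) auto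
  ultimately have "(M_delta \<epsilon> lam u g \<longlongrightarrow> M_left + M_right) (at_right 0)"
    unfolding M_delta_def by (intro tendsto_add)
  moreover have "M_left + M_right \<le> 0"
  proof -
    have "0 \<le> \<epsilon> * pi * \<beta>L\<^sup>2" "0 \<le> \<epsilon> * pi * \<beta>R\<^sup>2" using \<open>0 < \<epsilon>\<close> by simp_all
    then show ?thesis unfolding M_left_def M_right_def by auto

  qed
  ultimately show ?thesis
    using j by (intro exI[of _ "M_left + M_right"]) (auto simp: M_left_def M_right_def algebra_simps)
qed

end
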